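(* For any $\alpha\in(1/2,1]$, the collection of random variables \[ \Big\{\frac{n^\alpha}{I^n(\infty)}\,\mathbb I\big(I^n(\infty)>0\big)\Big\}_{n\in\mathbb N} \] (i.e. $(\hat I^n_\alpha(\infty))^{-1}$ on $\{I^n(\infty)>0\}$ and $0$ otherwise) is uniformly integrable.
   Context: Model: for each $n$, Poisson arrivals with rate $\lambda^n$, $\lambda^n/n\to\bar\lambda\in(0,\infty)$; for fixed $\alpha$ and $\beta>0$ there are $N^n=\lambda^n/\bar\mu_F+\beta(\lambda^n/\bar\mu_F)^\alpha$ servers; service rates $\tilde\mu^n_k$ are i.i.d. with distribution $F$ of mean $\bar\mu_F$, and $0<\mu_{\min}\le\tilde\mu^n_k\le\mu_{\max}<\infty$ a.s.; service at server $k$ is exponential($\tilde\mu^n_k$); arrivals finding idle servers are routed by a non-idling routing policy; FCFS queue with exponential($\gamma$) abandonment. $I^n_k(t)=1$ if server $k$ is idle at $t$ and $0$ otherwise, $I^n(t)=\sum_kI^n_k(t)$, $\hat I^n_\alpha=n^{-\alpha}I^n$, and $I^n(\infty)$ is distributed according to the stationary distribution of the $n$th system. $\mathbb I(\cdot)$ is the indicator function. *)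

theory Defs
  imports "HOL-Probability.Probability"
begin

text \<open>State of the n-th system: (set of idle servers, queue length). Service rates mu :: nat => real.
  route S is the (Markovian, state-dependent) distribution of the idle server
  chosen for an arrival finding the set S of idle servers.\<close>

type_synonym qstate = "nat set \<times> nat"

definition valid_state :: "nat \<Rightarrow> qstate \<Rightarrow> bool" where
  "valid_state N x \<longleftrightarrow> fst x \<subseteq> {..<N} \<and> (snd x > 0 \<longrightarrow> fst x = {})"

definition trans_rate ::
  "real \<Rightarrow> real \<Rightarrow> nat \<Rightarrow> (nat \<Rightarrow> real) \<Rightarrow> (nat set \<Rightarrow> nat pmf)
     \<Rightarrow> qstate \<Rightarrow> qstate \<Rightarrow> real" where
  "trans_rate lam gam N mu route x y =
     (let S = fst x; q = snd x; S' = fst y; q' = snd y in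
       \<comment> \<open>arrivals\<close>
       (if S \<noteq> {} then (\<Sum>k\<in>S. if S' = S - {k} \<and> q' = q then lam * pmf (route S) k else 0)
        else (if S' = {} \<and> q' = q + 1 then lam else 0))
       \<comment> \<open>service completions with empty queue: server becomes idle\<close>
     + (if q = 0 then (\<Sum>k\<in>{..<N} - S. if S' = insert k S \<and> q' = 0 then mu k else 0) else 0)
       \<comment> \<open>service completions (next customer in queue enters service) and abandonments\<close>
     + (if q > 0 \<and> S' = S \<and> q' = q - 1 then (\<Sum>k<N. mu k) + gam * real q else 0))"

definition stationary ::
  "real \<Rightarrow> real \<Rightarrow> nat \<Rightarrow> (nat \<Rightarrow> real) \<Rightarrow> (nat set \<Rightarrow> nat pmf) \<Rightarrow> qstate pmf \<Rightarrow> bool" where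
  "stationary lam gam N mu route p \<longleftrightarrow>
     set_pmf p \<subseteq> {x. valid_state N x} \<and>
     (\<forall>x. pmf p x * (\<Sum>\<^sub>\<infinity>y. trans_rate lam gam N mu route x y)
          = (\<Sum>\<^sub>\<infinity>y. pmf p y * trans_rate lam gam N mu route y x))"

definition idle_count :: "qstate \<Rightarrow> nat" where
  "idle_count x = card (fst x)"

definition inv_idle :: "real \<Rightarrow> nat \<Rightarrow> qstate \<Rightarrow> real" where
  "inv_idle \<alpha> n x = (if idle_count x > 0 then real n powr \<alpha> / real (idle_count x) else 0)"

end

theory Submission
  imports Defs "HOL-Real_Asymp.Real_Asymp"
begin

(*
  For fixed service rates mu, let P j be the stationary probability of exactly j idle servers.
  Across the cut between j and j + 1 idle servers, the arrival flow lam * P (j + 1) balances the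
  flow of service completions at level j, which is at least ((\<Sum>k. mu k) - j * mumax) * P j.
  If the total capacity exceeds lam + J * mumax by a margin E, this gives the geometric decay
  P j \<le> (lam / (lam + E)) ^ (J - j) below level J.  The variable n^\<alpha> / I exceeds M only on
  levels j < n^\<alpha> / M, so its truncated mean is tiny once J is of order n^\<alpha>.

  With L = lam / mubar the staffing leaves an excess capacity D = \<beta> * mubar * L^\<alpha>. By Hoeffding's
  inequality the random rates lose more than D / 2 of it only with probability
  exp (- const * L^(2\<alpha> - 1)), which is small because \<alpha> > 1/2; on that event the variable is
  still bounded by n^\<alpha>, which grows only polynomially.
*)

section \<open>Balance at states with idle servers\<close>

lemma has_sum_point_masses:
  fixes c :: "'k \<Rightarrow> 'a::{topological_comm_monoid_add,t2_space}"
  assumes "finite K"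
  shows "((\<lambda>y. \<Sum>k\<in>K. if y = a k then c k else 0) has_sum (\<Sum>k\<in>K. c k)) UNIV"
proof (rule has_sum_finite_neutralI[where B = "a ` K"])
  show "(\<Sum>k\<in>K. c k) = (\<Sum>y\<in>a ` K. \<Sum>k\<in>K. if y = a k then c k else 0)"
    using assms by (subst sum.swap) (simp add: sum.delta)
qed (use assms in \<open>auto intro!: sum.neutral\<close>)

lemma sum_remove_eq_sum_insert:
  fixes g :: "'b set \<Rightarrow> 'b \<Rightarrow> 'a::comm_monoid_add"
  assumes "T \<subseteq> A" "finite A"
  shows "(\<Sum>k\<in>T. if S = T - {k} then g T k else 0)
       = (\<Sum>k\<in>A - S. if T = insert k S then g (insert k S) k else 0)"
proof -
  have "finite T" using assms finite_subset by blast
  then have "(\<Sum>k\<in>T. if S = T - {k} then g T k else 0) = (\<Sum>k\<in>{k\<in>T. S = T - {k}}. g T k)"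
    by (simp add: sum.inter_filter)
  also have "{k\<in>T. S = T - {k}} = {k\<in>A - S. T = insert k S}"
    using assms(1) by auto
  also have "(\<Sum>k\<in>\<dots>. g T k) = (\<Sum>k\<in>A - S. if T = insert k S then g (insert k S) k else 0)"
    using assms(2) by (simp add: sum.inter_filter[symmetric] cong: if_cong)
  finally show ?thesis .
qed

lemma trans_rate_from_idle:
  assumes "S \<noteq> {}"
  shows "trans_rate lam gam N mu route (S, 0) y =
     (\<Sum>k\<in>S. if y = (S - {k}, 0) then lam * pmf (route S) k else 0)
   + (\<Sum>k\<in>{..<N} - S. if y = (insert k S, 0) then mu k else 0)"
  using assms by (cases y) (simp add: trans_rate_def)

lemma trans_rate_into_idle:
  assumes "S \<noteq> {}" "S \<subseteq> {..<N}" "valid_state N y"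
  shows "trans_rate lam gam N mu route y (S, 0) =
     (\<Sum>k\<in>{..<N} - S. if y = (insert k S, 0) then lam * pmf (route (insert k S)) k else 0)
   + (\<Sum>k\<in>S. if y = (S - {k}, 0) then mu k else 0)"
proof (cases y)
  case (Pair T q)
  have T: "T \<subseteq> {..<N}" "q > 0 \<Longrightarrow> T = {}"
    using assms(3) Pair by (auto simp: valid_state_def)
  show ?thesis
  proof (cases "q = 0")
    case True
    have "(\<Sum>k\<in>T. if S = T - {k} then lam * pmf (route T) k else 0)
        = (\<Sum>k\<in>{..<N} - S. if T = insert k S then lam * pmf (route (insert k S)) k else 0)"
      using T(1) by (rule sum_remove_eq_sum_insert) simp
    moreover have "(\<Sum>k\<in>S. if T = S - {k} then mu k else 0)
        = (\<Sum>k\<in>{..<N} - T. if S = insert k T then mu k else 0)"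
      using assms(2) by (rule sum_remove_eq_sum_insert) simp
    ultimately show ?thesis
      using assms(1) Pair True by (simp add: trans_rate_def)
  qed (use assms(1) Pair T in \<open>auto simp: trans_rate_def intro!: sum.neutral\<close>)
qed

lemma total_rate_from_idle:
  assumes "S \<noteq> {}" "finite S" "set_pmf (route S) \<subseteq> S"
  shows "(\<Sum>\<^sub>\<infinity>y. trans_rate lam gam N mu route (S, 0) y) = lam + (\<Sum>k\<in>{..<N} - S. mu k)"
proof -
  have "((\<lambda>y. trans_rate lam gam N mu route (S, 0) y)
          has_sum ((\<Sum>k\<in>S. lam * pmf (route S) k) + (\<Sum>k\<in>{..<N} - S. mu k))) UNIV"
    unfolding trans_rate_from_idle[OF assms(1)]
    using assms(2) by (intro has_sum_add has_sum_point_masses) simp_all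
  moreover have "(\<Sum>k\<in>S. lam * pmf (route S) k) = lam"
    using sum_pmf_eq_1[OF assms(2,3)] by (simp add: sum_distrib_left[symmetric])
  ultimately show ?thesis by (simp add: infsumI)
qed

lemma stationary_balance_idle:
  assumes stat: "stationary lam gam N mu route p"
    and route: "\<And>S. S \<noteq> {} \<Longrightarrow> set_pmf (route S) \<subseteq> S"
    and S: "S \<noteq> {}" "S \<subseteq> {..<N}"
  shows "pmf p (S, 0) * (lam + (\<Sum>k\<in>{..<N} - S. mu k)) =
     lam * (\<Sum>k\<in>{..<N} - S. pmf p (insert k S, 0) * pmf (route (insert k S)) k)
     + (\<Sum>k\<in>S. pmf p (S - {k}, 0) * mu k)"
proof -
  have finS: "finite S" using S(2) finite_subset by blast
  have inflow: "pmf p y * trans_rate lam gam N mu route y (S, 0) =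
     (\<Sum>k\<in>{..<N} - S. if y = (insert k S, 0)
        then pmf p (insert k S, 0) * (lam * pmf (route (insert k S)) k) else 0)
   + (\<Sum>k\<in>S. if y = (S - {k}, 0) then pmf p (S - {k}, 0) * mu k else 0)" for y
  proof (cases "y \<in> set_pmf p")
    case True
    then have "valid_state N y" using stat by (auto simp: stationary_def)
    then show ?thesis
      by (simp add: trans_rate_into_idle[OF S] distrib_left sum_distrib_left if_distrib
          cong: if_cong)
  next
    case False
    then have "(if y = (T, 0) then pmf p (T, 0) * c else 0) = 0" for T and c :: real
      by (auto simp: set_pmf_iff)
    then show ?thesis using False by (simp add: set_pmf_iff)
  qed
  have "((\<lambda>y. pmf p y * trans_rate lam gam N mu route y (S, 0)) has_sum
      ((\<Sum>k\<in>{..<N} - S. pmf p (insert k S, 0) * (lam * pmf (route (insert k S)) k))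
      + (\<Sum>k\<in>S. pmf p (S - {k}, 0) * mu k))) UNIV"
    unfolding inflow using finS by (intro has_sum_add has_sum_point_masses) simp_all
  then have "(\<Sum>\<^sub>\<infinity>y. pmf p y * trans_rate lam gam N mu route y (S, 0)) =
      lam * (\<Sum>k\<in>{..<N} - S. pmf p (insert k S, 0) * pmf (route (insert k S)) k)
      + (\<Sum>k\<in>S. pmf p (S - {k}, 0) * mu k)"
    by (simp add: infsumI sum_distrib_left mult_ac)
  moreover have "pmf p (S, 0) * (\<Sum>\<^sub>\<infinity>y. trans_rate lam gam N mu route (S, 0) y)
      = (\<Sum>\<^sub>\<infinity>y. pmf p y * trans_rate lam gam N mu route y (S, 0))"
    using stat by (simp add: stationary_def)
  ultimately show ?thesis
    using total_rate_from_idle[where route = route, OF S(1) finS route[OF S(1)]] by simp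
qed

section \<open>Levels of idle servers\<close>

(* For j \<ge> 1, valid states with j idle servers have an empty queue, so prob_idle p N j is the
   probability of exactly j idle servers. *)

definition idle_sets :: "nat \<Rightarrow> nat \<Rightarrow> nat set set" where
  "idle_sets N j = {S. S \<subseteq> {..<N} \<and> card S = j}"

definition prob_idle :: "qstate pmf \<Rightarrow> nat \<Rightarrow> nat \<Rightarrow> real" where
  "prob_idle p N j = (\<Sum>S\<in>idle_sets N j. pmf p (S, 0))"

definition completion_flow :: "qstate pmf \<Rightarrow> nat \<Rightarrow> (nat \<Rightarrow> real) \<Rightarrow> nat \<Rightarrow> real" where
  "completion_flow p N mu j = (\<Sum>S\<in>idle_sets N j. pmf p (S, 0) * (\<Sum>k\<in>{..<N} - S. mu k))"

lemma finite_idle_sets [simp]: "finite (idle_sets N j)"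
  unfolding idle_sets_def by (rule finite_subset[of _ "Pow {..<N}"]) auto

lemma idle_sets_top: "idle_sets N N = {{..<N}}"
  using card_subset_eq[of "{..<N}"] by (auto simp: idle_sets_def)

lemma idle_sets_empty: "N < j \<Longrightarrow> idle_sets N j = {}"
  by (auto simp: idle_sets_def dest!: card_mono[OF finite_lessThan])

lemma sum_idle_sets_insert:
  "(\<Sum>S\<in>idle_sets N j. \<Sum>k\<in>{..<N} - S. g (insert k S) k)
     = (\<Sum>T\<in>idle_sets N (Suc j). \<Sum>k\<in>T. g T k)"
proof -
  have "(\<Sum>S\<in>idle_sets N j. \<Sum>k\<in>{..<N} - S. g (insert k S) k)
      = (\<Sum>(S, k)\<in>Sigma (idle_sets N j) (\<lambda>S. {..<N} - S). g (insert k S) k)"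
    by (rule sum.Sigma) auto
  also have "\<dots> = (\<Sum>(T, k)\<in>Sigma (idle_sets N (Suc j)) (\<lambda>T. T). g T k)"
  proof (rule sum.reindex_bij_witness[where i = "\<lambda>(T, k). (T - {k}, k)"
                                         and j = "\<lambda>(S, k). (insert k S, k)"])
    fix a assume "a \<in> Sigma (idle_sets N j) (\<lambda>S. {..<N} - S)"
    then obtain S k where a: "a = (S, k)" "S \<subseteq> {..<N}" "card S = j" "k < N" "k \<notin> S"
      by (auto simp: idle_sets_def)
    moreover have "finite S" using a(2) finite_subset by blast
    ultimately show "(case case a of (S, k) \<Rightarrow> (insert k S, k) of (T, k) \<Rightarrow> (T - {k}, k)) = a"
      and "(case a of (S, k) \<Rightarrow> (insert k S, k)) \<in> Sigma (idle_sets N (Suc j)) (\<lambda>T. T)"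
      and "(case case a of (S, k) \<Rightarrow> (insert k S, k) of (T, k) \<Rightarrow> g T k)
             = (case a of (S, k) \<Rightarrow> g (insert k S) k)"
      by (auto simp: idle_sets_def)
  next
    fix b assume "b \<in> Sigma (idle_sets N (Suc j)) (\<lambda>T. T)"
    then obtain T k where b: "b = (T, k)" "T \<subseteq> {..<N}" "card T = Suc j" "k \<in> T"
      by (auto simp: idle_sets_def)
    moreover have "finite T" using b(2) finite_subset by blast
    ultimately show "(case case b of (T, k) \<Rightarrow> (T - {k}, k) of (S, k) \<Rightarrow> (insert k S, k)) = b"
      and "(case b of (T, k) \<Rightarrow> (T - {k}, k)) \<in> Sigma (idle_sets N j) (\<lambda>S. {..<N} - S)"
      by (auto simp: idle_sets_def)
  qed
  also have "\<dots> = (\<Sum>T\<in>idle_sets N (Suc j). \<Sum>k\<in>T. g T k)"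
    by (rule sum.Sigma[symmetric]) (auto simp: idle_sets_def intro: finite_subset)
  finally show ?thesis .
qed

lemma level_balance:
  assumes stat: "stationary lam gam N mu route p"
    and route: "\<And>S. S \<noteq> {} \<Longrightarrow> set_pmf (route S) \<subseteq> S"
  shows "lam * prob_idle p N (Suc j) + completion_flow p N mu (Suc j)
       = lam * prob_idle p N (Suc (Suc j)) + completion_flow p N mu j"
proof -
  have "lam * prob_idle p N (Suc j) + completion_flow p N mu (Suc j) =
      (\<Sum>S\<in>idle_sets N (Suc j). pmf p (S, 0) * (lam + (\<Sum>k\<in>{..<N} - S. mu k)))"
    unfolding prob_idle_def completion_flow_def
    by (simp add: sum_distrib_left distrib_left sum.distrib mult_ac)
  also have "\<dots> = (\<Sum>S\<in>idle_sets N (Suc j).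
        lam * (\<Sum>k\<in>{..<N} - S. pmf p (insert k S, 0) * pmf (route (insert k S)) k)
      + (\<Sum>k\<in>S. pmf p (S - {k}, 0) * mu k))"
    by (intro sum.cong refl stationary_balance_idle[OF stat route]) (auto simp: idle_sets_def)
  also have "\<dots> = lam * (\<Sum>S\<in>idle_sets N (Suc j). \<Sum>k\<in>{..<N} - S.
                          pmf p (insert k S, 0) * pmf (route (insert k S)) k)
      + (\<Sum>S\<in>idle_sets N (Suc j). \<Sum>k\<in>S. pmf p (S - {k}, 0) * mu k)"
    by (simp add: sum.distrib sum_distrib_left)
  also have "(\<Sum>S\<in>idle_sets N (Suc j). \<Sum>k\<in>{..<N} - S.
                pmf p (insert k S, 0) * pmf (route (insert k S)) k)
      = (\<Sum>T\<in>idle_sets N (Suc (Suc j)). pmf p (T, 0) * (\<Sum>k\<in>T. pmf (route T) k))"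
    using sum_idle_sets_insert[of "\<lambda>T k. pmf p (T, 0) * pmf (route T) k" N "Suc j"]
    by (simp add: sum_distrib_left)
  also have "\<dots> = prob_idle p N (Suc (Suc j))"
  proof -
    have "(\<Sum>k\<in>T. pmf (route T) k) = 1" if "T \<in> idle_sets N (Suc (Suc j))" for T
      using that by (intro sum_pmf_eq_1 route) (auto simp: idle_sets_def intro: finite_subset)
    then show ?thesis by (simp add: prob_idle_def)
  qed
  also have "(\<Sum>S\<in>idle_sets N (Suc j). \<Sum>k\<in>S. pmf p (S - {k}, 0) * mu k) = completion_flow p N mu j"
    using sum_idle_sets_insert[of "\<lambda>T k. pmf p (T - {k}, 0) * mu k" N j]
    by (simp add: completion_flow_def sum_distrib_left)
  finally show ?thesis .
qed

(* Telescoping level_balance downwards from level N, where no server is busy. *)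
lemma stationary_cut_equation:
  assumes stat: "stationary lam gam N mu route p"
    and route: "\<And>S. S \<noteq> {} \<Longrightarrow> set_pmf (route S) \<subseteq> S"
    and "j \<le> N"
  shows "lam * prob_idle p N (Suc j) = completion_flow p N mu j"
  using \<open>j \<le> N\<close>
proof (induction rule: inc_induct)
  case base
  show ?case
    by (simp add: prob_idle_def completion_flow_def idle_sets_top idle_sets_empty)
next
  case (step j)
  then show ?case using level_balance[OF stat route, of j] by simp
qed

lemma prob_idle_nonneg: "0 \<le> prob_idle p N j"
  unfolding prob_idle_def by (intro sum_nonneg) simp

lemma prob_idle_le_1: "prob_idle p N j \<le> 1"
proof -
  have "prob_idle p N j = measure_pmf.prob p ((\<lambda>S. (S, 0)) ` idle_sets N j)"
    by (simp add: prob_idle_def measure_measure_pmf_finite sum.reindex inj_on_def)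
  then show ?thesis by simp
qed

lemma completion_flow_ge:
  assumes "\<And>k. k < N \<Longrightarrow> mu k \<le> mumax"
  shows "((\<Sum>k<N. mu k) - real j * mumax) * prob_idle p N j \<le> completion_flow p N mu j"
proof -
  have "((\<Sum>k<N. mu k) - real j * mumax) * pmf p (S, 0) \<le> pmf p (S, 0) * (\<Sum>k\<in>{..<N} - S. mu k)"
    if "S \<in> idle_sets N j" for S
  proof -
    have S: "S \<subseteq> {..<N}" "card S = j" "finite S"
      using that by (auto simp: idle_sets_def finite_subset[OF _ finite_lessThan])
    have "(\<Sum>k\<in>S. mu k) \<le> real j * mumax"
      using sum_mono[of S mu "\<lambda>_. mumax"] S assms by auto
    then have "(\<Sum>k<N. mu k) - real j * mumax \<le> (\<Sum>k\<in>{..<N} - S. mu k)"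
      using S by (simp add: sum_diff)
    then show ?thesis by (simp add: mult.commute mult_left_mono)
  qed
  then show ?thesis
    unfolding prob_idle_def completion_flow_def sum_distrib_left by (rule sum_mono)
qed

lemma prob_idle_geometric:
  assumes stat: "stationary lam gam N mu route p"
    and route: "\<And>S. S \<noteq> {} \<Longrightarrow> set_pmf (route S) \<subseteq> S"
    and mu: "\<And>k. k < N \<Longrightarrow> mu k \<le> mumax" and mumax: "0 \<le> mumax"
    and lam: "0 < lam" and E: "0 < E" and J: "J \<le> N"
    and drift: "lam + E \<le> (\<Sum>k<N. mu k) - real J * mumax"
    and "j \<le> J"
  shows "prob_idle p N j \<le> (lam / (lam + E)) ^ (J - j)"
  using \<open>j \<le> J\<close>
proof (induction rule: inc_induct)
  case base
  show ?case using prob_idle_le_1 by simp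
next
  case (step i)
  define \<rho> where "\<rho> = lam / (lam + E)"
  have "(lam + E) * prob_idle p N i \<le> ((\<Sum>k<N. mu k) - real i * mumax) * prob_idle p N i"
    using drift mult_right_mono[of i J mumax] step.hyps mumax
    by (intro mult_right_mono prob_idle_nonneg) simp_all
  also have "\<dots> \<le> lam * prob_idle p N (Suc i)"
    using completion_flow_ge[OF mu] stationary_cut_equation[OF stat route, of i] step.hyps J
    by simp
  also have "\<dots> \<le> lam * \<rho> ^ (J - Suc i)"
    using step.IH lam by (simp add: \<rho>_def)
  finally have "prob_idle p N i \<le> \<rho> * \<rho> ^ (J - Suc i)"
    using lam E by (simp add: \<rho>_def field_simps del: power_divide)
  also have "\<rho> * \<rho> ^ (J - Suc i) = \<rho> ^ (J - i)"
    using step.hyps by (simp flip: power_Suc Suc_diff_Suc)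
  finally show ?case unfolding \<rho>_def .
qed

lemma measure_pmf_idle_levels:
  assumes "finite J"
  shows "measure_pmf.prob p ((\<lambda>S. (S, 0)) ` (\<Union>j\<in>J. idle_sets N j)) = (\<Sum>j\<in>J. prob_idle p N j)"
proof -
  have "measure_pmf.prob p ((\<lambda>S. (S, 0)) ` (\<Union>j\<in>J. idle_sets N j))
      = (\<Sum>S\<in>(\<Union>j\<in>J. idle_sets N j). pmf p (S, 0))"
    using assms by (simp add: measure_measure_pmf_finite sum.reindex inj_on_def)
  also have "\<dots> = (\<Sum>j\<in>J. prob_idle p N j)"
    unfolding prob_idle_def using assms
    by (intro sum.UNION_disjoint) (auto simp: idle_sets_def)
  finally show ?thesis .
qed

section \<open>The truncated inverse idleness\<close>

definition inv_idle_tail :: "real \<Rightarrow> nat \<Rightarrow> real \<Rightarrow> qstate \<Rightarrow> ennreal" where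
  "inv_idle_tail \<alpha> n M x = ennreal (inv_idle \<alpha> n x) * indicator {x. M < inv_idle \<alpha> n x} x"

lemma inv_idle_le: "inv_idle \<alpha> n x \<le> real n powr \<alpha>"
  by (simp add: inv_idle_def divide_le_eq mult_le_cancel_left1)

lemma inv_idle_tail_le: "inv_idle_tail \<alpha> n M x \<le> ennreal (real n powr \<alpha>)"
  by (simp add: inv_idle_tail_def inv_idle_le ennreal_leI split: split_indicator)

lemma inv_idle_tail_eq_0: "real n powr \<alpha> \<le> M \<Longrightarrow> inv_idle_tail \<alpha> n M x = 0"
  using inv_idle_le[of \<alpha> n x] by (simp add: inv_idle_tail_def)

lemma nn_integral_inv_idle_tail_le_powr:
  "(\<integral>\<^sup>+x. inv_idle_tail \<alpha> n M x \<partial>measure_pmf p) \<le> ennreal (real n powr \<alpha>)"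
proof -
  have "(\<integral>\<^sup>+x. inv_idle_tail \<alpha> n M x \<partial>measure_pmf p)
      \<le> (\<integral>\<^sup>+x. ennreal (real n powr \<alpha>) \<partial>measure_pmf p)"
    by (intro nn_integral_mono inv_idle_tail_le)
  then show ?thesis by (simp add: measure_pmf.emeasure_space_1)
qed

lemma nn_integral_inv_idle_tail_le_prob_idle:
  assumes valid: "set_pmf p \<subseteq> {x. valid_state N x}" and M: "0 < M"
    and K: "\<And>j. 1 \<le> j \<Longrightarrow> real j * M < real n powr \<alpha> \<Longrightarrow> j \<le> K"
  shows "(\<integral>\<^sup>+x. inv_idle_tail \<alpha> n M x \<partial>measure_pmf p)
     \<le> ennreal (real n powr \<alpha> * (\<Sum>j\<in>{1..K}. prob_idle p N j))"
proof -
  define A where "A = (\<lambda>S. (S, 0::nat)) ` (\<Union>j\<in>{1..K}. idle_sets N j)"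
  have "inv_idle_tail \<alpha> n M x \<le> ennreal (real n powr \<alpha>) * indicator A x" if x: "x \<in> set_pmf p" for x
  proof (cases "M < inv_idle \<alpha> n x")
    case True
    define j where "j = idle_count x"
    have "0 < j" and "M < real n powr \<alpha> / real j"
      using True M by (auto simp: inv_idle_def j_def split: if_splits)
    then have "j \<le> K"
      by (intro K) (auto simp: field_simps)
    moreover have "fst x \<subseteq> {..<N}" "snd x = 0"
      using valid x \<open>0 < j\<close> by (auto simp: valid_state_def j_def idle_count_def)
    ultimately have "x \<in> A"
      using \<open>0 < j\<close> unfolding A_def j_def idle_count_def idle_sets_def
      by (intro image_eqI[of _ _ "fst x"]) (auto simp: prod_eq_iff)
    then show ?thesis by (simp add: inv_idle_tail_le)
  qed (simp add: inv_idle_tail_def)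
  then have "(\<integral>\<^sup>+x. inv_idle_tail \<alpha> n M x \<partial>measure_pmf p)
      \<le> (\<integral>\<^sup>+x. ennreal (real n powr \<alpha>) * indicator A x \<partial>measure_pmf p)"
    by (intro nn_integral_mono_AE) (simp add: AE_measure_pmf_iff)
  also have "\<dots> = ennreal (real n powr \<alpha>) * ennreal (measure_pmf.prob p A)"
    by (subst nn_integral_cmult_indicator) (simp_all add: measure_pmf.emeasure_eq_measure)
  also have "\<dots> = ennreal (real n powr \<alpha> * (\<Sum>j\<in>{1..K}. prob_idle p N j))"
    by (simp add: A_def measure_pmf_idle_levels ennreal_mult sum_nonneg prob_idle_nonneg)
  finally show ?thesis .
qed

section \<open>Random service rates\<close>

lemma nn_integral_le_bad_event:
  fixes f :: "'a \<Rightarrow> ennreal"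
  assumes "prob_space P" and B: "B \<in> sets P" "emeasure P B \<le> ennreal h"
    and bound: "AE x in P. f x \<le> ennreal a" and good: "AE x in P. x \<notin> B \<longrightarrow> f x \<le> ennreal c"
    and "0 \<le> a" "0 \<le> h" "0 \<le> c"
  shows "(\<integral>\<^sup>+x. f x \<partial>P) \<le> ennreal (a * h + c)"
proof -
  interpret prob_space P by fact
  have "AE x in P. f x \<le> ennreal a * indicator B x + ennreal c"
    using bound good
  proof eventually_elim
    case (elim x)
    then show ?case by (cases "x \<in> B") (simp_all add: add_increasing2)
  qed
  then have "(\<integral>\<^sup>+x. f x \<partial>P) \<le> (\<integral>\<^sup>+x. ennreal a * indicator B x + ennreal c \<partial>P)"
    by (rule nn_integral_mono_AE)
  also have "\<dots> = ennreal a * emeasure P B + ennreal c"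
    using B(1) by (simp add: nn_integral_add nn_integral_cmult_indicator emeasure_space_1)
  also have "\<dots> \<le> ennreal (a * h + c)"
    using B(2) assms(6-8) by (simp add: ennreal_mult mult_left_mono)
  finally show ?thesis .
qed

lemma indep_vars_PiM_coordinates:
  assumes M: "\<And>i. i \<in> I \<Longrightarrow> prob_space (M i)" and "I \<noteq> {}"
  shows "prob_space.indep_vars (PiM I M) M (\<lambda>i x. x i) I"
proof -
  interpret prob_space "PiM I M" using M by (rule prob_space_PiM)
  have "distr (PiM I M) (PiM I M) (\<lambda>x. \<lambda>i\<in>I. x i) = distr (PiM I M) (PiM I M) (\<lambda>x. x)"
    by (rule distr_cong) (auto simp: space_PiM PiE_def extensional_restrict)
  moreover have "PiM I (\<lambda>i. distr (PiM I M) (M i) (\<lambda>x. x i)) = PiM I M"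
    by (intro PiM_cong) (simp_all add: distr_PiM_component M)
  ultimately show ?thesis
    by (subst indep_vars_iff_distr_eq_PiM') (simp_all add: assms)
qed

lemma PiM_Hoeffding_lower_tail:
  fixes F :: "real measure"
  assumes F: "prob_space F" "sets F = sets borel" and bounded: "AE x in F. a \<le> x \<and> x \<le> b"
    and "a < b" "0 < N" "0 \<le> \<epsilon>"
  shows "measure (PiM {..<N} (\<lambda>_. F))
           {x \<in> space (PiM {..<N} (\<lambda>_. F)). (\<Sum>k<N. x k) \<le> real N * (\<integral>x. x \<partial>F) - \<epsilon>}
      \<le> exp (-2 * \<epsilon>\<^sup>2 / (real N * (b - a)\<^sup>2))"
proof -
  define P where "P = PiM {..<N} (\<lambda>_. F)"
  interpret P: prob_space P unfolding P_def by (rule prob_space_PiM) (rule F(1))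
  have coord: "(\<lambda>x. x k) \<in> borel_measurable P" if "k < N" for k
    using that by (simp add: P_def measurable_cong_sets[OF refl F(2), symmetric])
  have distr_coord: "distr P borel (\<lambda>x. x k) = F" if "k < N" for k
  proof -
    have "distr P borel (\<lambda>x. x k) = distr P F (\<lambda>x. x k)"
      by (rule distr_cong) (simp_all add: F(2))
    also have "\<dots> = F"
      unfolding P_def using F(1) that by (intro distr_PiM_component) auto
    finally show ?thesis .
  qed
  have "P.indep_vars (\<lambda>_. F) (\<lambda>k x. x k) {..<N}"
    unfolding P_def using F(1) \<open>0 < N\<close> by (intro indep_vars_PiM_coordinates) auto
  then have indep: "P.indep_vars (\<lambda>_. borel) (\<lambda>k x. x k) {..<N}"
    by (simp add: P.indep_vars_def measurable_cong_sets[OF refl F(2)] F(2))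
  have mean: "P.expectation (\<lambda>x. x 0) = (\<integral>x. x \<partial>F)"
    using integral_distr[OF coord[OF \<open>0 < N\<close>], of "\<lambda>x. x"] distr_coord[OF \<open>0 < N\<close>] by simp
  interpret Hoeffding_ineq_iid P "{..<N}" "\<lambda>k x. x k" "\<lambda>x. x 0" a b "P.expectation (\<lambda>x. x 0)"
  proof unfold_locales
    show "AE x in P. x 0 \<in> {a..b}"
      unfolding P_def using F(1) bounded \<open>0 < N\<close> by (intro AE_PiM_component) auto
  qed (use indep distr_coord coord \<open>0 < N\<close> in auto)
  have "{..<N} \<noteq> {}" using \<open>0 < N\<close> by auto
  then show ?thesis
    using Hoeffding_ineq_le[OF \<open>0 \<le> \<epsilon>\<close> \<open>a < b\<close>] by (simp add: P_def[symmetric] mean)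
qed

lemma nn_integral_inv_idle_tail_le_geometric:
  assumes stat: "stationary lam gam N mu route p"
    and route: "\<And>S. S \<noteq> {} \<Longrightarrow> set_pmf (route S) \<subseteq> S"
    and mu: "\<And>k. k < N \<Longrightarrow> mu k \<le> mumax" and "0 \<le> mumax"
    and "0 < lam" "0 < E" "J \<le> N" "K \<le> J"
    and drift: "lam + E \<le> (\<Sum>k<N. mu k) - real J * mumax"
    and M: "0 < M" and K: "\<And>j. 1 \<le> j \<Longrightarrow> real j * M < real n powr \<alpha> \<Longrightarrow> j \<le> K"
  shows "(\<integral>\<^sup>+x. inv_idle_tail \<alpha> n M x \<partial>measure_pmf p)
     \<le> ennreal (real n powr \<alpha> * real K * (lam / (lam + E)) ^ (J - K))"
proof -
  have "prob_idle p N j \<le> (lam / (lam + E)) ^ (J - K)" if "j \<in> {1..K}" for j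
  proof -
    have "prob_idle p N j \<le> (lam / (lam + E)) ^ (J - j)"
      using that assms by (intro prob_idle_geometric[OF stat route mu]) auto
    also have "\<dots> \<le> (lam / (lam + E)) ^ (J - K)"
      using that assms by (intro power_decreasing) auto
    finally show ?thesis .
  qed
  then have sum_le: "(\<Sum>j\<in>{1..K}. prob_idle p N j) \<le> real K * (lam / (lam + E)) ^ (J - K)"
    using sum_mono[of "{1..K}" "prob_idle p N" "\<lambda>_. (lam / (lam + E)) ^ (J - K)"] by simp
  have "set_pmf p \<subseteq> {x. valid_state N x}"
    using stat by (simp add: stationary_def)
  then have "(\<integral>\<^sup>+x. inv_idle_tail \<alpha> n M x \<partial>measure_pmf p)
      \<le> ennreal (real n powr \<alpha> * (\<Sum>j\<in>{1..K}. prob_idle p N j))"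
    by (rule nn_integral_inv_idle_tail_le_prob_idle[OF _ M K])
  also have "\<dots> \<le> ennreal (real n powr \<alpha> * (real K * (lam / (lam + E)) ^ (J - K)))"
    using sum_le by (intro ennreal_leI mult_left_mono) auto
  finally show ?thesis by (simp add: mult.assoc)
qed

(* The Hoeffding interval is [mumin, mumax + 1], which is nondegenerate even when F is a
   point mass. *)
lemma nn_integral_inv_idle_tail_PiM_le:
  fixes F :: "real measure" and route :: "(nat \<Rightarrow> real) \<Rightarrow> nat set \<Rightarrow> nat pmf"
    and \<pi> :: "(nat \<Rightarrow> real) \<Rightarrow> qstate pmf"
  assumes F: "prob_space F" "sets F = sets borel" "AE x in F. mumin \<le> x \<and> x \<le> mumax"
    and route: "\<And>mu S. S \<noteq> {} \<Longrightarrow> set_pmf (route mu S) \<subseteq> S"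
    and stat: "\<And>mu. (\<forall>k<N. mumin \<le> mu k \<and> mu k \<le> mumax) \<Longrightarrow>
                 stationary lam gam N mu (route mu) (\<pi> mu)"
    and "mumin \<le> mumax" "0 \<le> mumax" "0 < lam" "0 < E" "J \<le> N" "K \<le> J" "0 < N" "0 \<le> \<epsilon>"
    and threshold: "lam + E + real J * mumax \<le> real N * (\<integral>x. x \<partial>F) - \<epsilon>"
    and M: "0 < M" and K: "\<And>j. 1 \<le> j \<Longrightarrow> real j * M < real n powr \<alpha> \<Longrightarrow> j \<le> K"
  shows "(\<integral>\<^sup>+mu. (\<integral>\<^sup>+x. inv_idle_tail \<alpha> n M x
            \<partial>measure_pmf (\<pi> mu)) \<partial>PiM {..<N} (\<lambda>_. F))
     \<le> ennreal (real n powr \<alpha> * exp (-2 * \<epsilon>\<^sup>2 / (real N * (mumax + 1 - mumin)\<^sup>2))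
               + real n powr \<alpha> * real K * (lam / (lam + E)) ^ (J - K))"
proof -
  define P where "P = PiM {..<N} (\<lambda>_. F)"
  interpret P: prob_space P unfolding P_def by (rule prob_space_PiM) (rule F(1))
  define B where "B = {mu \<in> space P. (\<Sum>k<N. mu k) \<le> real N * (\<integral>x. x \<partial>F) - \<epsilon>}"
  have "(\<lambda>mu. mu k) \<in> borel_measurable P" if "k < N" for k
    using that by (simp add: P_def measurable_cong_sets[OF refl F(2), symmetric])
  then have "(\<lambda>mu. \<Sum>k<N. mu k) \<in> borel_measurable P"
    by (intro borel_measurable_sum) auto
  then have "B \<in> sets P" unfolding B_def by measurable
  have "emeasure P B = ennreal (P.prob B)"
    by (rule P.emeasure_eq_measure)
  also have "\<dots> \<le> ennreal (exp (-2 * \<epsilon>\<^sup>2 / (real N * (mumax + 1 - mumin)\<^sup>2)))"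
    unfolding B_def P_def
    using F(3) assms
    by (intro ennreal_leI PiM_Hoeffding_lower_tail[OF F(1,2)]) (auto elim: eventually_mono)
  finally have bad: "emeasure P B \<le> \<dots>" .
  have "AE mu in P. \<forall>k\<in>{..<N}. mumin \<le> mu k \<and> mu k \<le> mumax"
    unfolding P_def using F(1,3) by (intro eventually_ball_finite ballI AE_PiM_component) auto
  then have good: "AE mu in P. mu \<notin> B \<longrightarrow>
      (\<integral>\<^sup>+x. inv_idle_tail \<alpha> n M x \<partial>measure_pmf (\<pi> mu))
      \<le> ennreal (real n powr \<alpha> * real K * (lam / (lam + E)) ^ (J - K))"
    using AE_space
  proof eventually_elim
    case (elim mu)
    show ?case
    proof
      assume "mu \<notin> B"
      then have "lam + E \<le> (\<Sum>k<N. mu k) - real J * mumax"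
        using elim threshold by (auto simp: B_def)
      moreover have stat_mu: "stationary lam gam N mu (route mu) (\<pi> mu)"
        using elim by (intro stat) auto
      ultimately show "(\<integral>\<^sup>+x. inv_idle_tail \<alpha> n M x \<partial>measure_pmf (\<pi> mu))
          \<le> ennreal (real n powr \<alpha> * real K * (lam / (lam + E)) ^ (J - K))"
        using elim assms
        by (intro nn_integral_inv_idle_tail_le_geometric[OF stat_mu route[where mu = mu]
              _ _ _ _ _ _ _ M K]) auto
    qed
  qed
  show ?thesis
    unfolding P_def[symmetric]
    using assms by (intro nn_integral_le_bad_event[OF P.prob_space_axioms \<open>B \<in> sets P\<close> bad _ good]
        AE_I2 nn_integral_inv_idle_tail_le_powr) auto
qed

section \<open>Asymptotics in the system size\<close>

lemma powr_le_self: "1 \<le> (L::real) \<Longrightarrow> \<alpha> \<le> 1 \<Longrightarrow> L powr \<alpha> \<le> L"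
  using powr_mono[of \<alpha> 1 L] by simp

lemma powr_2_mult_minus_1: "0 < (L::real) \<Longrightarrow> L powr (2 * \<alpha> - 1) = L powr \<alpha> * L powr \<alpha> / L"
  by (simp add: powr_diff powr_add[symmetric])

lemma Hoeffding_exponent_le:
  fixes L \<beta> w mubar :: real
  assumes "0 < w" "1 \<le> L" "0 < \<beta>" "\<alpha> \<le> 1" "real N = L + \<beta> * L powr \<alpha>"
  shows "exp (-2 * (\<beta> * mubar * L powr \<alpha> / 2)\<^sup>2 / (real N * w))
           \<le> exp (- (\<beta>\<^sup>2 * mubar\<^sup>2 / (2 * (1 + \<beta>) * w)) * L powr (2 * \<alpha> - 1))"
proof -
  have N: "real N \<le> (1 + \<beta>) * L" "0 < real N"
    using assms powr_le_self[of L \<alpha>] by (simp_all add: algebra_simps add_pos_nonneg)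
  have "\<beta>\<^sup>2 * mubar\<^sup>2 / (2 * (1 + \<beta>) * w) * L powr (2 * \<alpha> - 1)
      = (\<beta> * mubar * L powr \<alpha>)\<^sup>2 / (2 * w * ((1 + \<beta>) * L))"
    using assms by (subst powr_2_mult_minus_1) (simp_all add: power2_eq_square field_simps)
  also have "\<dots> \<le> (\<beta> * mubar * L powr \<alpha>)\<^sup>2 / (2 * w * real N)"
    using N assms by (intro divide_left_mono) auto
  also have "\<dots> = 2 * (\<beta> * mubar * L powr \<alpha> / 2)\<^sup>2 / (real N * w)"
    by (simp add: power2_eq_square mult_ac)
  finally show ?thesis by simp
qed

lemma drift_exponent_le:
  fixes L \<beta> mubar mumax :: real
  assumes "1 \<le> L" "0 < \<beta>" "0 < mubar" "0 < mumax" "\<alpha> \<le> 1"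
  defines "D \<equiv> \<beta> * mubar * L powr \<alpha>"
  shows "\<beta>\<^sup>2 * mubar / (16 * (4 + \<beta>) * mumax) * L powr (2 * \<alpha> - 1)
           \<le> D / 4 / (4 * mumax) * (D / 4 / (mubar * L + D / 4))"
proof -
  (* an opaque q keeps field_simps from splitting the denominator into a sum *)
  define q where "q = 4 + \<beta>"
  have "0 < D" "0 < q" using assms by (simp_all add: D_def q_def)
  have "\<beta>\<^sup>2 * mubar / (16 * q * mumax) * L powr (2 * \<alpha> - 1)
      = D / 4 / (4 * mumax) * (D / 4 / (mubar * L * q / 4))"
    using assms \<open>0 < q\<close>
    by (subst powr_2_mult_minus_1) (simp_all add: D_def power2_eq_square field_simps)
  also have "\<dots> \<le> D / 4 / (4 * mumax) * (D / 4 / (mubar * L + D / 4))"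
  proof (intro mult_left_mono divide_left_mono)
    show "mubar * L + D / 4 \<le> mubar * L * q / 4"
      using assms powr_le_self[of L \<alpha>] by (simp add: D_def q_def algebra_simps)
  qed (use assms(1-5) \<open>0 < D\<close> \<open>0 < q\<close> in \<open>auto intro!: mult_pos_pos add_pos_pos\<close>)
  finally show ?thesis by (simp add: q_def)
qed

lemma one_minus_power_le_exp:
  fixes x :: real
  assumes "x \<le> 1"
  shows "(1 - x) ^ m \<le> exp (- (real m * x))"
proof -
  have "(1 - x) ^ m \<le> exp (-x) ^ m"
    using assms exp_ge_add_one_self[of "-x"] by (intro power_mono) auto
  then show ?thesis by (simp add: exp_of_nat_mult[symmetric])
qed

lemma le_nat_floor_div_2:
  fixes x :: real
  assumes "real j < x / 2"
  shows "j \<le> nat \<lfloor>x\<rfloor> div 2"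
proof -
  have "2 * j \<le> nat \<lfloor>x\<rfloor>"
    using assms by linarith
  then show ?thesis by linarith
qed

lemma geometric_term_le:
  fixes lam E mumax :: real
  assumes "0 < lam" "0 < E" "0 < mumax" "2 * mumax \<le> E"
  defines "J \<equiv> nat \<lfloor>E / mumax\<rfloor>"
  shows "real (J div 2) * (lam / (lam + E)) ^ (J - J div 2)
           \<le> E / mumax * exp (- (E / (4 * mumax)) * (E / (lam + E)))"
proof -
  have "2 \<le> E / mumax"
    using assms by (simp add: le_divide_eq)
  then have J: "E / mumax - 1 \<le> real J" "real J \<le> E / mumax"
    unfolding J_def by linarith+
  have "J \<le> 2 * (J - J div 2)"
    by linarith
  then have "E / (4 * mumax) \<le> real (J - J div 2)"
    using J \<open>2 \<le> E / mumax\<close> by (simp add: field_simps)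
  then have "E / (4 * mumax) * (E / (lam + E)) \<le> real (J - J div 2) * (E / (lam + E))"
    using assms by (intro mult_right_mono) auto
  then have "exp (- (real (J - J div 2) * (E / (lam + E))))
      \<le> exp (- (E / (4 * mumax)) * (E / (lam + E)))"
    by simp
  moreover have "(lam / (lam + E)) ^ (J - J div 2) \<le> exp (- (real (J - J div 2) * (E / (lam + E))))"
    using one_minus_power_le_exp[of "E / (lam + E)" "J - J div 2"] assms
    by (simp add: field_simps)
  moreover have "real (J div 2) \<le> E / mumax"
    using J by linarith
  ultimately show ?thesis
    using assms by (intro mult_mono) (auto intro: order_trans)
qed

lemma tail_bound_le_envelope:
  fixes L \<beta> mubar mumax w c :: real
  assumes "0 < mubar" "mubar \<le> mumax" "0 < \<beta>" "\<alpha> \<le> 1" "0 < w" "1 \<le> L"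
    and "real N = L + \<beta> * L powr \<alpha>" "real n powr \<alpha> \<le> c * L powr \<alpha>"
  defines "D \<equiv> \<beta> * mubar * L powr \<alpha>"
  defines "J \<equiv> nat \<lfloor>D / 4 / mumax\<rfloor>"
  assumes "8 * mumax \<le> D"
  shows "real n powr \<alpha> * exp (-2 * (D / 2)\<^sup>2 / (real N * w))
           + real n powr \<alpha> * real (J div 2) * (mubar * L / (mubar * L + D / 4)) ^ (J - J div 2)
         \<le> c * L powr \<alpha> * exp (- (\<beta>\<^sup>2 * mubar\<^sup>2 / (2 * (1 + \<beta>) * w)) * L powr (2 * \<alpha> - 1))
           + c * (\<beta> * mubar / (4 * mumax)) * L powr (2 * \<alpha>)
               * exp (- (\<beta>\<^sup>2 * mubar / (16 * (4 + \<beta>) * mumax)) * L powr (2 * \<alpha> - 1))"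
proof (rule add_mono)
  have pos: "0 < mumax" "0 < D" "0 \<le> c * L powr \<alpha>"
    using assms(1-8) by (auto simp: D_def intro: order_trans[rotated])
  show "real n powr \<alpha> * exp (-2 * (D / 2)\<^sup>2 / (real N * w))
      \<le> c * L powr \<alpha> * exp (- (\<beta>\<^sup>2 * mubar\<^sup>2 / (2 * (1 + \<beta>) * w)) * L powr (2 * \<alpha> - 1))"
    using Hoeffding_exponent_le[of w L \<beta> \<alpha> N mubar] assms(1-8) pos(3)
    by (intro mult_mono) (auto simp: D_def)
  have "real (J div 2) * (mubar * L / (mubar * L + D / 4)) ^ (J - J div 2)
      \<le> D / 4 / mumax * exp (- (D / 4 / (4 * mumax)) * (D / 4 / (mubar * L + D / 4)))"
    unfolding J_def using pos assms(1,6,11) by (intro geometric_term_le) auto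
  also have "\<dots> \<le> \<beta> * mubar / (4 * mumax) * L powr \<alpha>
                * exp (- (\<beta>\<^sup>2 * mubar / (16 * (4 + \<beta>) * mumax)) * L powr (2 * \<alpha> - 1))"
    using drift_exponent_le[of L \<beta> mubar mumax \<alpha>] assms(1-6) pos
    by (intro mult_mono) (auto simp: D_def)
  finally have "real n powr \<alpha> * (real (J div 2) * (mubar * L / (mubar * L + D / 4)) ^ (J - J div 2))
      \<le> (c * L powr \<alpha>) * (\<beta> * mubar / (4 * mumax) * L powr \<alpha>
                * exp (- (\<beta>\<^sup>2 * mubar / (16 * (4 + \<beta>) * mumax)) * L powr (2 * \<alpha> - 1)))"
    using pos assms(1,6) by (intro mult_mono[OF assms(8)]) auto
  moreover have "L powr (2 * \<alpha>) = L powr \<alpha> * L powr \<alpha>"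
    by (simp add: powr_add[symmetric])
  ultimately show "real n powr \<alpha> * real (J div 2)
        * (mubar * L / (mubar * L + D / 4)) ^ (J - J div 2)
      \<le> c * (\<beta> * mubar / (4 * mumax)) * L powr (2 * \<alpha>)
          * exp (- (\<beta>\<^sup>2 * mubar / (16 * (4 + \<beta>) * mumax)) * L powr (2 * \<alpha> - 1))"
    by (simp add: mult_ac)
qed

(* D = N * mubar - lam is the excess capacity.  Rates losing less than D / 2 of it leave the
   drift E = D / 4 on the J = \<lfloor>D / (4 * mumax)\<rfloor> lowest levels, and the bound on M makes the
   tail reach only levels below J / 2. *)
lemma nn_integral_inv_idle_tail_PiM_le_envelope:
  fixes F :: "real measure" and route :: "(nat \<Rightarrow> real) \<Rightarrow> nat set \<Rightarrow> nat pmf"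
    and \<pi> :: "(nat \<Rightarrow> real) \<Rightarrow> qstate pmf"
  assumes F: "prob_space F" "sets F = sets borel" "AE x in F. mumin \<le> x \<and> x \<le> mumax"
    and mubar: "mubar = (\<integral>x. x \<partial>F)" "0 < mubar" "mumin \<le> mubar" "mubar \<le> mumax"
    and \<alpha>: "\<alpha> \<le> 1" and \<beta>: "0 < \<beta>"
    and L: "1 \<le> L" "8 * mumax \<le> \<beta> * mubar * L powr \<alpha>"
    and N: "real N = L + \<beta> * L powr \<alpha>"
    and route: "\<And>mu S. S \<noteq> {} \<Longrightarrow> set_pmf (route mu S) \<subseteq> S"
    and stat: "\<And>mu. (\<forall>k<N. mumin \<le> mu k \<and> mu k \<le> mumax) \<Longrightarrow>
                 stationary (mubar * L) gam N mu (route mu) (\<pi> mu)"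
    and c: "0 < c" "real n powr \<alpha> \<le> c * L powr \<alpha>"
    and M: "8 * c * mumax / (\<beta> * mubar) \<le> M"
  shows "(\<integral>\<^sup>+mu. (\<integral>\<^sup>+x. inv_idle_tail \<alpha> n M x \<partial>measure_pmf (\<pi> mu)) \<partial>PiM {..<N} (\<lambda>_. F))
     \<le> ennreal (c * L powr \<alpha> * exp (- (\<beta>\<^sup>2 * mubar\<^sup>2 / (2 * (1 + \<beta>) * (mumax + 1 - mumin)\<^sup>2))
                                     * L powr (2 * \<alpha> - 1))
             + c * (\<beta> * mubar / (4 * mumax)) * L powr (2 * \<alpha>)
                 * exp (- (\<beta>\<^sup>2 * mubar / (16 * (4 + \<beta>) * mumax)) * L powr (2 * \<alpha> - 1)))"
proof -
  define D where "D = \<beta> * mubar * L powr \<alpha>"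
  define J where "J = nat \<lfloor>D / 4 / mumax\<rfloor>"
  have "0 < real N"
    using N L \<beta> by (simp add: add_pos_nonneg)
  then have pos: "0 < mumax" "0 < D" "0 < M" "0 < N"
    using mubar(2-4) L \<beta> M c by (auto simp: D_def intro!: order.strict_trans2[OF _ M])
  have J: "real J \<le> D / 4 / mumax"
    using pos by (simp add: J_def)
  have "mubar * L powr \<alpha> \<le> 4 * mumax * L powr \<alpha>"
    using mubar(2-4) by (intro mult_right_mono) auto
  then have "D / 4 / mumax \<le> \<beta> * L powr \<alpha>"
    using pos \<beta> by (simp add: D_def field_simps)
  then have "J \<le> N"
    using J N L by linarith
  have threshold: "mubar * L + D / 4 + real J * mumax \<le> real N * (\<integral>x. x \<partial>F) - D / 2"
    using J pos by (simp add: N D_def mubar(1)[symmetric] field_simps)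
  have K: "j \<le> J div 2" if "real j * M < real n powr \<alpha>" for j
  proof -
    have "c * (8 * mumax) * L powr \<alpha> \<le> M * (\<beta> * mubar) * L powr \<alpha>"
      using M \<beta> mubar(2) by (intro mult_right_mono) (auto simp: field_simps)
    then have "c * L powr \<alpha> \<le> D / 4 / mumax / 2 * M"
      using pos by (simp add: D_def field_simps)
    then have "real j * M < D / 4 / mumax / 2 * M"
      using that c(2) by linarith
    then have "real j < D / 4 / mumax / 2"
      using mult_less_cancel_right_pos[OF \<open>0 < M\<close>] by blast
    then show ?thesis
      unfolding J_def by (rule le_nat_floor_div_2)
  qed
  have "(\<integral>\<^sup>+mu. (\<integral>\<^sup>+x. inv_idle_tail \<alpha> n M x \<partial>measure_pmf (\<pi> mu)) \<partial>PiM {..<N} (\<lambda>_. F))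
     \<le> ennreal (real n powr \<alpha> * exp (-2 * (D / 2)\<^sup>2 / (real N * (mumax + 1 - mumin)\<^sup>2))
               + real n powr \<alpha> * real (J div 2)
                   * (mubar * L / (mubar * L + D / 4)) ^ (J - J div 2))"
    using mubar(2-4) F(3) pos L \<open>J \<le> N\<close> K threshold
    by (intro nn_integral_inv_idle_tail_PiM_le[OF F(1,2,3) route stat]) auto
  also have "\<dots> \<le> ennreal (c * L powr \<alpha>
                * exp (- (\<beta>\<^sup>2 * mubar\<^sup>2 / (2 * (1 + \<beta>) * (mumax + 1 - mumin)\<^sup>2))
                       * L powr (2 * \<alpha> - 1))
             + c * (\<beta> * mubar / (4 * mumax)) * L powr (2 * \<alpha>)
                 * exp (- (\<beta>\<^sup>2 * mubar / (16 * (4 + \<beta>) * mumax)) * L powr (2 * \<alpha> - 1)))"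
    unfolding D_def J_def using mubar(2-4) \<alpha> \<beta> L N c pos
    by (intro ennreal_leI tail_bound_le_envelope) auto
  finally show ?thesis .
qed

lemma tendsto_SUP_0_at_top:
  fixes T :: "nat \<Rightarrow> real \<Rightarrow> ennreal" and g :: "nat \<Rightarrow> real"
  assumes vanish: "\<And>n. eventually (\<lambda>M. T n M = 0) at_top"
    and bound: "eventually (\<lambda>n. \<forall>M\<ge>M0. T n M \<le> ennreal (g n)) sequentially"
    and g: "g \<longlonglongrightarrow> 0"
  shows "((\<lambda>M. SUP n. T n M) \<longlongrightarrow> 0) at_top"
proof (rule order_tendstoI)
  fix e :: ennreal assume "0 < e"
  then obtain q :: rat where q: "0 < ennreal (real_of_rat q)" "ennreal (real_of_rat q) < e"
    using ennreal_rat_dense[of 0 e] by auto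
  define r where "r = real_of_rat q"
  have "0 < r" using q(1) by (simp add: r_def)
  have "eventually (\<lambda>n. g n < r \<and> (\<forall>M\<ge>M0. T n M \<le> ennreal (g n))) sequentially"
    using order_tendstoD(2)[OF g \<open>0 < r\<close>] bound by eventually_elim simp
  then obtain n0 where n0: "\<And>n. n0 \<le> n \<Longrightarrow> g n < r \<and> (\<forall>M\<ge>M0. T n M \<le> ennreal (g n))"
    by (auto simp: eventually_sequentially)
  have "eventually (\<lambda>M. M0 \<le> M \<and> (\<forall>n\<in>{..<n0}. T n M = 0)) at_top"
    using vanish by (intro eventually_conj eventually_ge_at_top eventually_ball_finite) auto
  then show "eventually (\<lambda>M. (SUP n. T n M) < e) at_top"
  proof eventually_elim
    case (elim M)
    have "T n M \<le> ennreal r" for n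
    proof (cases "n < n0")
      case False
      then have "T n M \<le> ennreal (g n)" "g n < r"
        using n0[of n] elim by auto
      then show ?thesis by (meson ennreal_leI less_imp_le order_trans)
    qed (use elim in simp)
    then have "(SUP n. T n M) \<le> ennreal r"
      by (rule SUP_least)
    then show ?case using q(2) by (simp add: r_def)
  qed
qed simp

lemma filterlim_at_top_if_ratio_tendsto:
  fixes f :: "nat \<Rightarrow> real"
  assumes "(\<lambda>n. f n / real n) \<longlonglongrightarrow> l" "0 < l"
  shows "filterlim f at_top sequentially"
proof -
  have "filterlim (\<lambda>n. f n / real n * real n) at_top sequentially"
    by (rule filterlim_tendsto_pos_mult_at_top[OF assms filterlim_real_sequentially])
  moreover have "eventually (\<lambda>n. f n / real n * real n = f n) sequentially"
    using eventually_gt_at_top[of 0] by eventually_elim simp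
  ultimately show ?thesis by (simp add: filterlim_cong)
qed

lemma eventually_powr_le_ratio_powr:
  fixes f :: "nat \<Rightarrow> real"
  assumes "(\<lambda>n. f n / real n) \<longlonglongrightarrow> l" "0 < l" "0 \<le> \<alpha>"
  shows "eventually (\<lambda>n. real n powr \<alpha> \<le> (2 / l) powr \<alpha> * f n powr \<alpha>) sequentially"
proof -
  have "eventually (\<lambda>n. l / 2 < f n / real n) sequentially"
    using order_tendstoD(1)[OF assms(1), of "l / 2"] assms(2) by simp
  then show ?thesis
    using eventually_gt_at_top[of 0]
  proof eventually_elim
    case (elim n)
    then have "real n \<le> 2 / l * f n"
      using assms(2) by (simp add: field_simps)
    then have "real n powr \<alpha> \<le> (2 / l * f n) powr \<alpha>"
      using assms(3) by (intro powr_mono2) auto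
    also have "\<dots> = (2 / l) powr \<alpha> * f n powr \<alpha>"
      using assms elim by (intro powr_mult)
    finally show ?case .
  qed
qed

lemma eventually_large_by_ratio:
  fixes f :: "nat \<Rightarrow> real"
  assumes "(\<lambda>n. f n / real n) \<longlonglongrightarrow> l" "0 < l" "0 < \<alpha>" "0 < a"
  shows "eventually (\<lambda>n. 1 \<le> f n \<and> b \<le> a * f n powr \<alpha>
                          \<and> real n powr \<alpha> \<le> (2 / l) powr \<alpha> * f n powr \<alpha>) sequentially"
proof -
  have f: "filterlim f at_top sequentially"
    using assms(1,2) by (rule filterlim_at_top_if_ratio_tendsto)
  then have "filterlim (\<lambda>n. a * f n powr \<alpha>) at_top sequentially"
    using assms(3,4)
    by (intro filterlim_tendsto_pos_mult_at_top[OF tendsto_const]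
        filterlim_compose[OF real_powr_at_top])
  then have "eventually (\<lambda>n. 1 \<le> f n \<and> b \<le> a * f n powr \<alpha>) sequentially"
    using f by (auto simp: filterlim_at_top intro: eventually_conj)
  moreover have "eventually (\<lambda>n. real n powr \<alpha> \<le> (2 / l) powr \<alpha> * f n powr \<alpha>) sequentially"
    using assms(3) by (intro eventually_powr_le_ratio_powr[OF assms(1,2)]) simp
  ultimately show ?thesis
    by eventually_elim auto
qed

lemma powr_exp_envelope_tendsto_0:
  fixes k1 k2 c d :: real
  assumes "0 < k1" "0 < k2" "1/2 < \<alpha>"
  shows "((\<lambda>x. c * x powr \<alpha> * exp (- k1 * x powr (2 * \<alpha> - 1))
                + d * x powr (2 * \<alpha>) * exp (- k2 * x powr (2 * \<alpha> - 1))) \<longlongrightarrow> 0) at_top"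
proof -
  have "((\<lambda>x. x powr a * exp (- k * x powr e)) \<longlongrightarrow> 0) at_top" if "0 < k" "0 < e" for a k e :: real
    using that by real_asymp
  then have "((\<lambda>x. c * x powr \<alpha> * exp (- k1 * x powr (2 * \<alpha> - 1))
                + d * x powr (2 * \<alpha>) * exp (- k2 * x powr (2 * \<alpha> - 1))) \<longlongrightarrow> c * 0 + d * 0) at_top"
    unfolding mult.assoc using assms by (intro tendsto_intros) auto
  then show ?thesis by simp
qed

theorem lemma7:
  fixes \<alpha> \<beta> \<gamma> lbar mubar mumin mumax :: real
    and lam :: "nat \<Rightarrow> real" and N :: "nat \<Rightarrow> nat"
    and F :: "real measure"
    and route :: "nat \<Rightarrow> (nat \<Rightarrow> real) \<Rightarrow> nat set \<Rightarrow> nat pmf"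
    and \<pi> :: "nat \<Rightarrow> (nat \<Rightarrow> real) \<Rightarrow> qstate pmf"
  assumes alpha: "1/2 < \<alpha>" "\<alpha> \<le> 1"
    and beta: "\<beta> > 0"
    and gamma: "\<gamma> > 0"
    and lam_pos: "\<And>n. lam n > 0"
    and lam_lim: "(\<lambda>n. lam n / real n) \<longlonglongrightarrow> lbar" and lbar: "lbar > 0"
    and F_prob: "prob_space F" and F_sets: "sets F = sets borel"
    and F_mean: "integrable F (\<lambda>x. x)" "mubar = (\<integral>x. x \<partial>F)"
    and F_bounds: "0 < mumin" "mumin \<le> mumax" "AE x in F. mumin \<le> x \<and> x \<le> mumax"
    and N_def: "\<And>n. real (N n) = lam n / mubar + \<beta> * (lam n / mubar) powr \<alpha>"
    and route_ok: "\<And>n mu S. S \<noteq> {} \<Longrightarrow> set_pmf (route n mu S) \<subseteq> S"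
    and pi_stat: "\<And>n mu. (\<forall>k<N n. mumin \<le> mu k \<and> mu k \<le> mumax) \<Longrightarrow>
                    stationary (lam n) \<gamma> (N n) mu (route n mu) (\<pi> n mu)"
    and pi_meas: "\<And>n x. (\<lambda>mu. pmf (\<pi> n mu) x) \<in> borel_measurable (PiM {..<N n} (\<lambda>_. F))"
  shows "((\<lambda>M. SUP n. \<integral>\<^sup>+ mu. (\<integral>\<^sup>+ x. ennreal (inv_idle \<alpha> n x)
              * indicator {x. inv_idle \<alpha> n x > M} x \<partial>(measure_pmf (\<pi> n mu)))
            \<partial>(PiM {..<N n} (\<lambda>_. F))) \<longlongrightarrow> 0) at_top"
proof -
  interpret F: prob_space F by (rule F_prob)
  have mubar: "mumin \<le> mubar" "mubar \<le> mumax"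
    using F_bounds(3) unfolding F_mean(2)
    by (auto intro!: F.integral_ge_const F.integral_le_const F_mean(1) elim: eventually_mono)
  define L where "L n = lam n / mubar" for n
  define c where "c = (2 / (lbar / mubar)) powr \<alpha>"
  define k1 where "k1 = \<beta>\<^sup>2 * mubar\<^sup>2 / (2 * (1 + \<beta>) * (mumax + 1 - mumin)\<^sup>2)"
  define k2 where "k2 = \<beta>\<^sup>2 * mubar / (16 * (4 + \<beta>) * mumax)"
  define k3 where "k3 = \<beta> * mubar / (4 * mumax)"
  define G where "G x = c * x powr \<alpha> * exp (- k1 * x powr (2 * \<alpha> - 1))
                        + c * k3 * x powr (2 * \<alpha>) * exp (- k2 * x powr (2 * \<alpha> - 1))" for x
  define T where "T n M = (\<integral>\<^sup>+ mu. (\<integral>\<^sup>+ x. inv_idle_tail \<alpha> n M x \<partial>measure_pmf (\<pi> n mu))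
                          \<partial>PiM {..<N n} (\<lambda>_. F))" for n M
  have pos: "0 < mubar" "0 < c" "0 < k1" "0 < k2"
    using F_bounds mubar alpha beta lbar by (simp_all add: c_def k1_def k2_def)
  have L_ratio: "(\<lambda>n. L n / real n) \<longlonglongrightarrow> lbar / mubar"
    using tendsto_divide[OF lam_lim tendsto_const, of mubar] pos by (simp add: L_def mult.commute)
  have "eventually (\<lambda>n. 1 \<le> L n \<and> 8 * mumax \<le> \<beta> * mubar * L n powr \<alpha>
                          \<and> real n powr \<alpha> \<le> c * L n powr \<alpha>) sequentially"
    unfolding c_def using pos lbar alpha beta by (intro eventually_large_by_ratio[OF L_ratio]) auto
  then have "eventually (\<lambda>n. \<forall>M \<ge> 8 * c * mumax / (\<beta> * mubar). T n M \<le> ennreal (G (L n)))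
              sequentially"
  proof eventually_elim
    case (elim n)
    have "lam n = mubar * L n" using pos by (simp add: L_def)
    then show ?case
      unfolding T_def G_def k1_def k2_def k3_def
      using elim mubar pos beta alpha F_bounds N_def[of n] pi_stat[of n]
      by (intro allI impI nn_integral_inv_idle_tail_PiM_le_envelope[OF F_prob F_sets F_bounds(3)
            F_mean(2) _ _ _ _ beta _ _ _ route_ok]) (auto simp: L_def)
  qed
  moreover have "(\<lambda>n. G (L n)) \<longlonglongrightarrow> 0"
    using filterlim_compose[OF powr_exp_envelope_tendsto_0
        filterlim_at_top_if_ratio_tendsto[OF L_ratio]] pos lbar alpha
    unfolding G_def by simp
  moreover have "eventually (\<lambda>M. T n M = 0) at_top" for n
    using eventually_ge_at_top[of "real n powr \<alpha>"]
    by eventually_elim (simp add: T_def inv_idle_tail_eq_0)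
  ultimately have "((\<lambda>M. SUP n. T n M) \<longlongrightarrow> 0) at_top"
    by (intro tendsto_SUP_0_at_top)
  then show ?thesis
    unfolding T_def inv_idle_tail_def by simp
qed

end
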